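(* $\mathcal{U}_2^m(\mathfrak{N})=\mathbb{N}_{\ge 2}$.
   Context: $\mathbb{N}$ denotes the non-negative integers and $\mathbb{N}_{\ge2}$ the set of integers greater than one. A numerical semigroup is a submonoid of $(\mathbb{N},+)$ with finite complement; $\mathfrak{N}$ denotes the set of all numerical semigroups. A numerical semigroup is irreducible if it cannot be written as the intersection of two numerical semigroups properly containing it. Given a numerical semigroup $S$ and irreducible numerical semigroups $S_1,\dots,S_n$, the expression $S_1\cap\dots\cap S_n$ is a factorization of $S$ (of length $n$) if $S=S_1\cap\dots\cap S_n$ and $S\neq\bigcap_{j\in J}S_j$ for every nonempty proper subset $J\subsetneq\{1,\dots,n\}$. For a positive integer $k$, $\mathcal{U}_k^m(\mathfrak{N})$ is the set of positive integers $l$ such that there exists a numerical semigroup having a factorization of length $k$ and a factorization of length $l$. *)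

theory Defs
  imports Main
begin

definition numerical_semigroup :: "nat set \<Rightarrow> bool" where
  "numerical_semigroup S \<longleftrightarrow>
     0 \<in> S \<and> (\<forall>x\<in>S. \<forall>y\<in>S. x + y \<in> S) \<and> finite (UNIV - S)"

definition irreducible_ns :: "nat set \<Rightarrow> bool" where
  "irreducible_ns S \<longleftrightarrow> numerical_semigroup S \<and>
     \<not> (\<exists>T U. numerical_semigroup T \<and> numerical_semigroup U \<and>
              S \<subset> T \<and> S \<subset> U \<and> S = T \<inter> U)"

definition is_factorization :: "nat set \<Rightarrow> nat \<Rightarrow> (nat \<Rightarrow> nat set) \<Rightarrow> bool" where
  "is_factorization S n Si \<longleftrightarrow> n \<ge> 1 \<and>
     (\<forall>i\<in>{1..n}. irreducible_ns (Si i)) \<and>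
     S = (\<Inter>i\<in>{1..n}. Si i) \<and>
     (\<forall>J. J \<noteq> {} \<and> J \<subset> {1..n} \<longrightarrow> S \<noteq> (\<Inter>j\<in>J. Si j))"

definition has_factorization_of_length :: "nat set \<Rightarrow> nat \<Rightarrow> bool" where
  "has_factorization_of_length S n \<longleftrightarrow> (\<exists>Si. is_factorization S n Si)"

definition U_m :: "nat \<Rightarrow> nat set" where
  "U_m k = {l. l > 0 \<and> (\<exists>S. numerical_semigroup S \<and>
       has_factorization_of_length S k \<and> has_factorization_of_length S l)}"

end

theory Submission
  imports Defs
begin

text \<open>A factorization of length 1 says that the semigroup itself is irreducible, and an
  irreducible semigroup is never a nonredundant intersection of two or more semigroups, so 1 is
  excluded. Conversely, for \<open>t > 0\<close> both \<open>evens_above (2t)\<close> (the even numbers and everything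
  above \<open>4t\<close>) and \<open>upper_half (4t)\<close> are irreducible, so their intersection has a factorization
  of length 2. The same semigroup is also the intersection of the \<open>t + 1\<close> semigroups
  \<open>upper_half F\<close> for \<open>F = 4t\<close> and \<open>F\<close> odd between \<open>2t\<close> and \<open>4t\<close>; this one is nonredundant
  because each \<open>upper_half F\<close> omits its own \<open>F\<close>, which lies in all the others.\<close>

lemma numerical_semigroup_INT:
  assumes "finite J" "J \<noteq> {}" "\<forall>j\<in>J. numerical_semigroup (Si j)"
  shows "numerical_semigroup (\<Inter>j\<in>J. Si j)"
proof -
  have "UNIV - (\<Inter>j\<in>J. Si j) = (\<Union>j\<in>J. UNIV - Si j)" by blast
  moreover have "finite (\<Union>j\<in>J. UNIV - Si j)"
    using assms unfolding numerical_semigroup_def by blast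
  ultimately have "finite (UNIV - (\<Inter>j\<in>J. Si j))" by simp
  with assms show ?thesis unfolding numerical_semigroup_def by blast
qed

lemma numerical_semigroup_Int:
  "numerical_semigroup A \<Longrightarrow> numerical_semigroup B \<Longrightarrow> numerical_semigroup (A \<inter> B)"
  unfolding numerical_semigroup_def
  by (auto intro: finite_subset[of "UNIV - (A \<inter> B)" "(UNIV - A) \<union> (UNIV - B)"])

text \<open>Every proper oversemigroup of \<open>S\<close> contains a gap \<open>x\<close> and hence \<open>F = x + (F - x)\<close> or
  \<open>F = x + x\<close>; so two of them cannot intersect to \<open>S\<close>.\<close>
lemma irreducible_nsI:
  assumes ns: "numerical_semigroup S" and F: "F \<notin> S"
    and gaps: "\<And>x. x \<notin> S \<Longrightarrow> x \<noteq> F \<Longrightarrow> x < F \<and> (F - x \<in> S \<or> 2 * x = F)"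
  shows "irreducible_ns S"
proof -
  have F_in: "F \<in> V" if V: "numerical_semigroup V" and SV: "S \<subset> V" for V
  proof -
    obtain x where x: "x \<in> V" "x \<notin> S" using SV by blast
    have add: "a \<in> V \<Longrightarrow> b \<in> V \<Longrightarrow> a + b \<in> V" for a b
      using V unfolding numerical_semigroup_def by blast
    show ?thesis
    proof (cases "x = F")
      case False
      with gaps[OF x(2)] have "x < F" "F - x \<in> V \<or> 2 * x = F" using SV by auto
      then show ?thesis using add[OF x(1), of "F - x"] add[OF x(1) x(1)] by (auto simp: mult_2)
    qed (use x in simp)
  qed
  show ?thesis
    unfolding irreducible_ns_def using ns F F_in by blast
qed

lemma is_factorizationI:
  assumes "n \<ge> 1" "\<forall>i\<in>{1..n}. irreducible_ns (Si i)" "S = (\<Inter>i\<in>{1..n}. Si i)"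
    and witness: "\<forall>i\<in>{1..n}. \<exists>w. w \<notin> Si i \<and> (\<forall>j\<in>{1..n}. j \<noteq> i \<longrightarrow> w \<in> Si j)"
  shows "is_factorization S n Si"
  unfolding is_factorization_def
proof (intro conjI assms allI impI)
  fix J :: "nat set" assume J: "J \<noteq> {} \<and> J \<subset> {1..n}"
  then obtain i where i: "i \<in> {1..n}" "i \<notin> J" by blast
  with witness obtain w where "w \<notin> Si i" "\<forall>j\<in>{1..n}. j \<noteq> i \<longrightarrow> w \<in> Si j" by blast
  then have "w \<in> (\<Inter>j\<in>J. Si j)" "w \<notin> S" using J i assms(3) by auto
  then show "S \<noteq> (\<Inter>j\<in>J. Si j)" by blast
qed

lemma irreducible_if_factorization_length_1:
  "is_factorization S 1 Si \<Longrightarrow> irreducible_ns S"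
  unfolding is_factorization_def by simp

lemma factorization_length_of_irreducible:
  assumes irr: "irreducible_ns S" and fact: "is_factorization S n Si"
  shows "n = 1"
proof (rule ccontr)
  assume "n \<noteq> 1"
  with fact have n: "n \<ge> 2" unfolding is_factorization_def by simp
  define U where "U = (\<Inter>j\<in>{2..n}. Si j)"
  have split_first: "{1..n} = insert 1 {2..n}" using n by auto
  have "\<forall>i\<in>{1..n}. irreducible_ns (Si i)"
    and S: "S = (\<Inter>i\<in>{1..n}. Si i)"
    and minimal: "\<And>J. J \<noteq> {} \<Longrightarrow> J \<subset> {1..n} \<Longrightarrow> S \<noteq> (\<Inter>j\<in>J. Si j)"
    using fact unfolding is_factorization_def by blast+
  then have ns: "\<forall>i\<in>{1..n}. numerical_semigroup (Si i)"
    unfolding irreducible_ns_def by blast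
  have S_eq: "S = Si 1 \<inter> U" unfolding S U_def split_first INT_insert ..
  have "{1} \<subset> {1..n}"
  proof
    show "{1} \<subseteq> {1..n}" using n by simp
    have "2 \<in> {1..n}" "2 \<notin> {1::nat}" using n by simp_all
    then show "{1} \<noteq> {1..n}" by metis
  qed
  then have "S \<noteq> Si 1" using minimal[of "{1}"] by simp
  moreover have "{2..n} \<subset> {1..n}" using n by (simp add: psubset_eq)
  then have "S \<noteq> U" using minimal[of "{2..n}"] n unfolding U_def by simp
  ultimately have "S \<subset> Si 1" "S \<subset> U" using S_eq by (simp_all add: psubset_eq)
  moreover have "numerical_semigroup (Si 1)" "numerical_semigroup U"
    using ns n unfolding U_def by (auto intro!: numerical_semigroup_INT)
  ultimately show False using irr S_eq unfolding irreducible_ns_def by blast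
qed

text \<open>The largest numerical semigroup with Frobenius number \<open>F\<close> (for \<open>F > 0\<close>).\<close>
definition upper_half :: "nat \<Rightarrow> nat set" where
  "upper_half F = {0} \<union> {y. F < 2 * y \<and> y \<noteq> F}"

lemma mem_upper_half [simp]: "y \<in> upper_half F \<longleftrightarrow> y = 0 \<or> F < 2 * y \<and> y \<noteq> F"
  unfolding upper_half_def by auto

lemma numerical_semigroup_upper_half: "numerical_semigroup (upper_half F)"
  unfolding numerical_semigroup_def
proof (intro conjI ballI)
  have "UNIV - upper_half F \<subseteq> {..F}" by auto
  then show "finite (UNIV - upper_half F)" using finite_subset by blast
qed auto

lemma irreducible_upper_half: "F > 0 \<Longrightarrow> irreducible_ns (upper_half F)"
  by (rule irreducible_nsI[where F = F, OF numerical_semigroup_upper_half]) auto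

definition evens_above :: "nat \<Rightarrow> nat set" where
  "evens_above k = {y. even y \<or> 2 * k < y}"

lemma mem_evens_above [simp]: "y \<in> evens_above k \<longleftrightarrow> even y \<or> 2 * k < y"
  unfolding evens_above_def by simp

lemma numerical_semigroup_evens_above: "numerical_semigroup (evens_above k)"
  unfolding numerical_semigroup_def
proof (intro conjI ballI)
  have "UNIV - evens_above k \<subseteq> {..2 * k}" by auto
  then show "finite (UNIV - evens_above k)" using finite_subset by blast
qed auto

lemma irreducible_evens_above:
  assumes "k > 0"
  shows "irreducible_ns (evens_above k)"
proof (rule irreducible_nsI[where F = "2 * k - 1", OF numerical_semigroup_evens_above])
  fix x assume "x \<notin> evens_above k" "x \<noteq> 2 * k - 1"
  then show "x < 2 * k - 1 \<and> (2 * k - 1 - x \<in> evens_above k \<or> 2 * x = 2 * k - 1)"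
    by (auto elim!: oddE) presburger
qed (use assms in auto)

text \<open>Each member omits its own Frobenius number \<open>F i\<close>, which lies above half of every other.\<close>
lemma is_factorization_upper_halves:
  assumes "n \<ge> 1" "inj_on F {1..n}" "\<forall>i\<in>{1..n}. 0 < F i \<and> M < F i \<and> F i \<le> 2 * M"
  shows "is_factorization (\<Inter>i\<in>{1..n}. upper_half (F i)) n (\<lambda>i. upper_half (F i))"
proof (rule is_factorizationI)
  show "\<forall>i\<in>{1..n}. \<exists>w. w \<notin> upper_half (F i) \<and>
      (\<forall>j\<in>{1..n}. j \<noteq> i \<longrightarrow> w \<in> upper_half (F j))"
  proof (intro ballI exI conjI impI)
    fix i assume i: "i \<in> {1..n}"
    then show "F i \<notin> upper_half (F i)" using assms(3) by simp
    fix j assume j: "j \<in> {1..n}" "j \<noteq> i"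
    then have "F j \<noteq> F i" using assms(2) i by (meson inj_on_contraD)
    moreover have "M < F i" "F j \<le> 2 * M" using assms(3) i j(1) by auto
    then have "F j < 2 * F i" by linarith
    ultimately show "F i \<in> upper_half (F j)" by simp
  qed
qed (use assms in \<open>auto intro: irreducible_upper_half\<close>)

lemma INT_upper_half_eq_evens_above_Int_upper_half:
  "(\<Inter>i\<in>{1..t + 1}. upper_half (if i = 1 then 4 * t else 2 * t + 2 * i - 3)) =
     evens_above (2 * t) \<inter> upper_half (4 * t)"
  (is "(\<Inter>i\<in>_. upper_half (?F i)) = ?S")
proof -
  have "{1..t + 1} = insert 1 {2..t + 1}" by auto
  then have "(\<Inter>i\<in>{1..t + 1}. upper_half (?F i)) =
      upper_half (4 * t) \<inter> (\<Inter>F\<in>?F ` {2..t + 1}. upper_half F)"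
    by simp
  also have "?F ` {2..t + 1} = {F. odd F \<and> 2 * t < F \<and> F < 4 * t}"
  proof (intro equalityI subsetI)
    fix F assume "F \<in> {F. odd F \<and> 2 * t < F \<and> F < 4 * t}"
    then obtain k where "F = 2 * k + 1" "t \<le> k" "2 * k + 1 < 4 * t" by (auto elim!: oddE)
    then have "k + 2 - t \<in> {2..t + 1}" "F = ?F (k + 2 - t)" by auto
    then show "F \<in> ?F ` {2..t + 1}" by blast
  qed auto
  also have "upper_half (4 * t) \<inter> (\<Inter>F\<in>{F. odd F \<and> 2 * t < F \<and> F < 4 * t}. upper_half F) = ?S"
    by (auto elim!: oddE) presburger+
  finally show ?thesis .
qed

lemma evens_above_Int_upper_half_factorization_length_2:
  assumes "t > 0"
  shows "has_factorization_of_length (evens_above (2 * t) \<inter> upper_half (4 * t)) 2"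
proof -
  let ?Si = "\<lambda>i::nat. if i = 1 then evens_above (2 * t) else upper_half (4 * t)"
  have two: "{1..2::nat} = {1, 2}" by auto
  have "is_factorization (evens_above (2 * t) \<inter> upper_half (4 * t)) 2 ?Si"
  proof (rule is_factorizationI)
    show "\<forall>i\<in>{1..2}. \<exists>w. w \<notin> ?Si i \<and> (\<forall>j\<in>{1..2}. j \<noteq> i \<longrightarrow> w \<in> ?Si j)"
    proof
      fix i :: nat assume "i \<in> {1..2}"
      then consider "i = 1" | "i = 2" by fastforce
      then show "\<exists>w. w \<notin> ?Si i \<and> (\<forall>j\<in>{1..2}. j \<noteq> i \<longrightarrow> w \<in> ?Si j)"
      proof cases
        case 1
        then show ?thesis using assms by (intro exI[of _ "2 * t + 1"]) (auto simp: two)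
      next
        case 2
        then show ?thesis using assms by (intro exI[of _ "4 * t"]) (auto simp: two)
      qed
    qed
    show "\<forall>i\<in>{1..2}. irreducible_ns (?Si i)"
      using assms by (simp add: two irreducible_evens_above irreducible_upper_half)
    show "evens_above (2 * t) \<inter> upper_half (4 * t) = (\<Inter>i\<in>{1..2}. ?Si i)"
      unfolding two by (simp add: Int_commute)
  qed simp
  then show ?thesis unfolding has_factorization_of_length_def by blast
qed

lemma evens_above_Int_upper_half_factorization_length_Suc:
  assumes "t > 0"
  shows "has_factorization_of_length (evens_above (2 * t) \<inter> upper_half (4 * t)) (t + 1)"
proof -
  let ?F = "\<lambda>i. if i = 1 then 4 * t else 2 * t + 2 * i - 3"
  have inj: "inj_on ?F {1..t + 1}"
    by (rule inj_onI) (simp split: if_splits; presburger)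
  have range: "\<forall>i\<in>{1..t + 1}. 0 < ?F i \<and> 2 * t < ?F i \<and> ?F i \<le> 2 * (2 * t)"
    using assms by auto
  have "is_factorization (\<Inter>i\<in>{1..t + 1}. upper_half (?F i)) (t + 1) (\<lambda>i. upper_half (?F i))"
    by (rule is_factorization_upper_halves[OF _ inj range]) simp
  then show ?thesis
    unfolding has_factorization_of_length_def INT_upper_half_eq_evens_above_Int_upper_half
    by blast
qed

theorem mainTheorem7:
  shows "U_m 2 = {l::nat. l \<ge> 2}"
proof (intro set_eqI iffI)
  fix l assume "l \<in> U_m 2"
  then obtain S R Si where l: "l > 0" and R: "is_factorization S 2 R"
    and Si: "is_factorization S l Si"
    unfolding U_m_def has_factorization_of_length_def by blast
  have "l \<noteq> 1"
  proof
    assume "l = 1"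
    with Si have "irreducible_ns S" using irreducible_if_factorization_length_1 by simp
    from factorization_length_of_irreducible[OF this R] show False by simp
  qed
  with l show "l \<in> {l. l \<ge> 2}" by simp
next
  fix l :: nat assume "l \<in> {l. l \<ge> 2}"
  then obtain t where t: "t > 0" "l = t + 1" by (intro that[of "l - 1"]) auto
  have "numerical_semigroup (evens_above (2 * t) \<inter> upper_half (4 * t))"
    by (intro numerical_semigroup_Int numerical_semigroup_evens_above
        numerical_semigroup_upper_half)
  with evens_above_Int_upper_half_factorization_length_2[OF t(1)]
    evens_above_Int_upper_half_factorization_length_Suc[OF t(1)]
  show "l \<in> U_m 2"
    unfolding U_m_def t(2) by auto
qed

end
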